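(* Let $S\subseteq\mathbb{N}$ with $0\in S$ and $1\in S$. Then there exists a continuous function $f:[0,1]\to\mathbb{R}$ with $\Omega_f=S$.
   Context: $\mathbb{N}=\{0,1,2,\dots\}$. For a continuous $f:[0,1]\to\mathbb{R}$, $\Omega_f=\{n\in\mathbb{N}\cup\{\infty\} : \exists x\in\mathbb{R}\text{ with } |f^{-1}(x)|=n\}$, where $|f^{-1}(x)|$ is the cardinality of $\{t\in[0,1]: f(t)=x\}$ and $\infty$ stands for an infinite cardinality. The set $S$ may be finite or infinite. *)

theory Defs
  imports "HOL-Analysis.Analysis" "HOL-Library.Extended_Nat"
begin

definition ecard :: "'a set \<Rightarrow> enat" where
  "ecard A = (if finite A then enat (card A) else \<infinity>)"

definition Omega :: "(real \<Rightarrow> real) \<Rightarrow> enat set" where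
  "Omega f = {n. \<exists>x::real. ecard {t \<in> {0..1}. f t = x} = n}"

end

theory Submission
  imports Defs
begin

text \<open>
  Count preimages in the half-open interval \<open>[0, 1)\<close> only: these counts add up when
  paths are concatenated, and the closed count differs just at the final value. The basic
  block runs from 0 to 1, hitting 0 exactly \<open>d\<close> times and every level in \<open>(0, 1)\<close> exactly
  \<open>2 d - 1\<close> times; since 1 is hit only once, its oscillations must accumulate at 1. Rescaled
  blocks and humps are stacked into an infinite staircase through the points \<open>m / (m + 1)\<close>,
  whose level counts are 0, 1, the odd numbers \<open>2 D m - 1\<close> between consecutive stairs, and
  any positive values \<open>v (m + 1) < D m + D (m + 1)\<close> at the stairs. If every even element of
  \<open>S\<close> lies below an odd one, this realises \<open>S\<close>. Otherwise, unless \<open>S = {0, 1, 2}\<close> (a V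
  shape), some even \<open>b \<ge> 4\<close> in \<open>S\<close> exceeds all odd elements but 1, and a dip to 0 before
  the staircase and back after it turns the odd counts \<open>2 D m - 1\<close> into the even \<open>2 D m\<close>.
\<close>

section \<open>Level counts on the half-open unit interval\<close>

definition half_open_level :: "(real \<Rightarrow> real) \<Rightarrow> real \<Rightarrow> real set" where
  "half_open_level g y = {s \<in> {0..<1}. g s = y}"

definition has_profile :: "(real \<Rightarrow> real) \<Rightarrow> (real \<Rightarrow> nat) \<Rightarrow> bool" where
  "has_profile g P \<longleftrightarrow> (\<forall>y. finite (half_open_level g y) \<and> card (half_open_level g y) = P y)"

lemma has_profile_cong: "has_profile g P \<Longrightarrow> (\<And>y. P y = Q y) \<Longrightarrow> has_profile g Q"
  by (simp add: has_profile_def)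

lemma half_open_level_joinpaths:
  assumes "pathfinish g = pathstart h"
  shows "half_open_level (g +++ h) y =
    (\<lambda>s. s/2) ` half_open_level g y \<union> (\<lambda>s. (s+1)/2) ` half_open_level h y"
proof (rule set_eqI)
  fix t :: real
  have left: "t \<in> (\<lambda>s. s/2) ` A \<longleftrightarrow> 2*t \<in> A" for A
    by (auto simp: image_iff field_simps intro!: bexI[where x="2*t"])
  have right: "t \<in> (\<lambda>s. (s+1)/2) ` A \<longleftrightarrow> 2*t - 1 \<in> A" for A
    by (auto simp: image_iff field_simps intro!: bexI[where x="2*t - 1"])
  have gh: "g 1 = h 0"
    using assms by (simp add: pathstart_def pathfinish_def)
  consider "t < 1/2" | "t = 1/2" | "t > 1/2"
    by linarith
  then show "t \<in> half_open_level (g +++ h) y \<longleftrightarrow>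
      t \<in> (\<lambda>s. s/2) ` half_open_level g y \<union> (\<lambda>s. (s+1)/2) ` half_open_level h y"
  proof cases
    case 2
    then have "2 * t = 1"
      by simp
    then show ?thesis
      using gh by (simp add: left right half_open_level_def joinpaths_def)
  qed (simp_all add: left right half_open_level_def joinpaths_def)
qed

lemma has_profile_joinpaths:
  assumes "has_profile g P" "has_profile h Q" "pathfinish g = pathstart h"
  shows "has_profile (g +++ h) (\<lambda>y. P y + Q y)"
  unfolding has_profile_def
proof
  fix y
  have "(\<lambda>s. s/2) ` half_open_level g y \<inter> (\<lambda>s. (s+1)/2) ` half_open_level h y = {}"
    by (auto simp: half_open_level_def)
  moreover have "inj_on (\<lambda>s::real. s/2) A" "inj_on (\<lambda>s::real. (s+1)/2) A" for A
    by (auto simp: inj_on_def)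
  ultimately show
    "finite (half_open_level (g +++ h) y) \<and> card (half_open_level (g +++ h) y) = P y + Q y"
    using assms unfolding half_open_level_joinpaths[OF assms(3)] has_profile_def
    by (simp add: card_Un_disjoint card_image)
qed

lemma half_open_level_reversepath:
  "half_open_level (reversepath g) y =
    (\<lambda>s. 1 - s) ` (half_open_level g y - {0} \<union> (if g 1 = y then {1} else {}))"
proof (rule set_eqI)
  fix t :: real
  have "t \<in> (\<lambda>s. 1 - s) ` A \<longleftrightarrow> 1 - t \<in> A" for A
    by (auto simp: image_iff intro!: bexI[where x="1 - t"])
  moreover have "1 - t \<in> half_open_level g y - {0} \<union> (if g 1 = y then {1} else {}) \<longleftrightarrow>
      0 \<le> t \<and> t < 1 \<and> g (1 - t) = y"
    by (cases "t = 0") (auto simp: half_open_level_def)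
  ultimately show "t \<in> half_open_level (reversepath g) y \<longleftrightarrow>
      t \<in> (\<lambda>s. 1 - s) ` (half_open_level g y - {0} \<union> (if g 1 = y then {1} else {}))"
    by (simp add: half_open_level_def reversepath_def)
qed

text \<open>Reversal moves the endpoint at 1 into the half-open interval and the one at 0 out of it.\<close>
lemma has_profile_reversepath:
  assumes "has_profile g P"
  shows "has_profile (reversepath g)
    (\<lambda>y. P y + of_bool (pathfinish g = y) - of_bool (pathstart g = y))"
  unfolding has_profile_def
proof
  fix y
  have fin: "finite (half_open_level g y)" "card (half_open_level g y) = P y"
    using assms by (auto simp: has_profile_def)
  have c0: "card (half_open_level g y - {0}) = P y - of_bool (g 0 = y)"
    using fin by (simp add: card_Diff_singleton_if half_open_level_def)
  have le: "of_bool (g 0 = y) \<le> P y"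
  proof (cases "g 0 = y")
    case True
    then have "0 \<in> half_open_level g y"
      by (simp add: half_open_level_def)
    then have "card (half_open_level g y) \<noteq> 0"
      using fin(1) by auto
    with True fin(2) show ?thesis
      by simp
  qed simp
  have c1: "card (if g 1 = y then {1::real} else {}) = of_bool (g 1 = y)"
    by simp
  have "inj_on (\<lambda>s::real. 1 - s) A" for A
    by (auto simp: inj_on_def)
  moreover have "(half_open_level g y - {0}) \<inter> (if g 1 = y then {1} else {}) = {}"
    by (auto simp: half_open_level_def)
  ultimately have "finite (half_open_level (reversepath g) y) \<and>
      card (half_open_level (reversepath g) y) = P y - of_bool (g 0 = y) + of_bool (g 1 = y)"
    unfolding half_open_level_reversepath using fin(1) c0 c1
    by (simp add: card_image card_Un_disjoint del: of_bool_eq split_of_bool)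
  then show "finite (half_open_level (reversepath g) y) \<and> card (half_open_level (reversepath g) y) =
      P y + of_bool (pathfinish g = y) - of_bool (pathstart g = y)"
    using le by (simp add: pathstart_def pathfinish_def)
qed

definition rescale_path :: "real \<Rightarrow> real \<Rightarrow> (real \<Rightarrow> real) \<Rightarrow> real \<Rightarrow> real" where
  "rescale_path p q g t = p + (q - p) * g t"

lemma has_profile_rescale_path:
  assumes "has_profile g P" "p \<noteq> q"
  shows "has_profile (rescale_path p q g) (\<lambda>y. P ((y - p)/(q - p)))"
proof -
  have "half_open_level (rescale_path p q g) y = half_open_level g ((y - p)/(q - p))" for y
    using assms(2) by (auto simp: half_open_level_def rescale_path_def field_simps)
  then show ?thesis
    using assms(1) by (simp add: has_profile_def)
qed

lemma path_rescale_path: "path g \<Longrightarrow> path (rescale_path p q g)"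
  unfolding path_def rescale_path_def by (intro continuous_intros)

lemma path_image_rescale_path:
  assumes "path_image g \<subseteq> {0..1}"
  shows "path_image (rescale_path p q g) \<subseteq> closed_segment p q"
proof -
  have "p + (q - p) * x \<in> closed_segment p q" if "x \<in> {0..1}" for x
    using that by (auto simp: closed_segment_def algebra_simps intro!: exI[of _ x])
  then show ?thesis
    using assms by (auto simp: path_image_def rescale_path_def)
qed

lemma half_open_level_linepath:
  assumes "a \<noteq> b"
  shows "half_open_level (linepath a b) y = {0..<1} \<inter> {(y - a)/(b - a)}"
  using assms by (auto simp: half_open_level_def linepath_def field_simps)

lemma has_profile_linepath_up:
  assumes "a < b"
  shows "has_profile (linepath a b) (\<lambda>y. of_bool (a \<le> y \<and> y < b))"
proof -
  have "(y - a)/(b - a) \<in> {0..<1} \<longleftrightarrow> a \<le> y \<and> y < b" for y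
    using assms by (simp add: divide_simps)
  then show ?thesis
    using assms by (auto simp: has_profile_def half_open_level_linepath Int_insert_right)
qed

lemma has_profile_linepath_down:
  assumes "b < a"
  shows "has_profile (linepath a b) (\<lambda>y. of_bool (b < y \<and> y \<le> a))"
proof -
  have "(y - a)/(b - a) \<in> {0..<1} \<longleftrightarrow> b < y \<and> y \<le> a" for y
    using assms by (auto simp: divide_simps)
  then show ?thesis
    using assms by (auto simp: has_profile_def half_open_level_linepath Int_insert_right)
qed

definition hump :: "real \<Rightarrow> real \<Rightarrow> real \<Rightarrow> real" where
  "hump a h = linepath a h +++ linepath h a"

lemma pathstart_hump [simp]: "pathstart (hump a h) = a"
  and pathfinish_hump [simp]: "pathfinish (hump a h) = a"
  by (simp_all add: hump_def)

lemma path_hump: "path (hump a h)"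
  by (simp add: hump_def)

lemma path_image_hump: "a \<le> h \<Longrightarrow> path_image (hump a h) = {a..h}"
  by (auto simp: hump_def path_image_join closed_segment_eq_real_ivl)

lemma has_profile_hump:
  assumes "a < h"
  shows "has_profile (hump a h) (\<lambda>y. of_bool (a \<le> y \<and> y < h) + of_bool (a < y \<and> y \<le> h))"
  unfolding hump_def
  using assms
  by (intro has_profile_joinpaths has_profile_linepath_up has_profile_linepath_down) simp_all

lemma Omega_eq_if_has_profile:
  assumes "has_profile f P"
  shows "Omega f = enat ` range (\<lambda>y. P y + of_bool (pathfinish f = y))"
proof -
  have "{t \<in> {0..1}. f t = y} = half_open_level f y \<union> (if f 1 = y then {1} else {})" for y
    by (auto simp: half_open_level_def less_le)
  moreover have "half_open_level f y \<inter> (if f 1 = y then {1} else {}) = {}" for y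
    by (auto simp: half_open_level_def)
  ultimately have "ecard {t \<in> {0..1}. f t = y} = enat (P y + of_bool (f 1 = y))" for y
    using assms by (auto simp: has_profile_def card_Un_disjoint ecard_def)
  then have "Omega f = range (\<lambda>y. enat (P y + of_bool (f 1 = y)))"
    by (auto simp: Omega_def)
  then show ?thesis
    by (simp add: image_image pathfinish_def)
qed

lemma Omega_eqI:
  assumes "has_profile f P" and count: "\<And>y. c y = P y + of_bool (pathfinish f = y)"
    and "\<And>y. c y \<in> T" and "c ` W = T"
  shows "Omega f = enat ` T"
proof -
  have "range c = T"
  proof (rule subset_antisym)
    show "range c \<subseteq> T"
      using assms(3) by blast
    show "T \<subseteq> range c"
      unfolding assms(4)[symmetric] by (rule image_mono) simp
  qed
  moreover have "c = (\<lambda>y. P y + of_bool (pathfinish f = y))"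
    using count by blast
  ultimately show ?thesis
    using Omega_eq_if_has_profile[OF assms(1)] by simp
qed

section \<open>Stairs\<close>

definition stair :: "nat \<Rightarrow> real" where
  "stair j = real j / (real j + 1)"

lemma stair_less_iff [simp]: "stair a < stair b \<longleftrightarrow> a < b"
  by (simp add: stair_def divide_simps algebra_simps)

lemma stair_le_iff [simp]: "stair a \<le> stair b \<longleftrightarrow> a \<le> b"
  by (simp add: stair_def divide_simps algebra_simps)

lemma stair_eq_iff [simp]: "stair a = stair b \<longleftrightarrow> a = b"
  by (metis stair_le_iff order_antisym order_refl)

lemma stair_nonneg [simp]: "0 \<le> stair a"
  by (simp add: stair_def)

lemma stair_less_1 [simp]: "stair a < 1"
  by (simp add: stair_def)

lemma stair_le_1 [simp]: "stair a \<le> 1"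
  using stair_less_1 by (rule less_imp_le)

lemma stair_0 [simp]: "stair 0 = 0"
  by (simp add: stair_def)

lemma stair_pos_iff [simp]: "0 < stair a \<longleftrightarrow> 0 < a"
  by (simp add: stair_def zero_less_divide_iff)

lemma stair_eq_0_iff [simp]: "stair a = 0 \<longleftrightarrow> a = 0"
  by (simp add: stair_def)

lemma one_minus_stair: "1 - stair a = 1 / (real a + 1)"
  by (simp add: stair_def divide_simps)

text \<open>The odds \<open>t / (1 - t)\<close> of \<open>t \<in> [stair n, stair (n + 1)]\<close> range over \<open>[n, n + 1]\<close>.\<close>
lemma stair_le_iff_odds:
  assumes "y < 1"
  shows "stair n \<le> y \<longleftrightarrow> real n \<le> y / (1 - y)"
  using assms by (simp add: stair_def divide_simps algebra_simps)

lemma odds_stair [simp]: "stair n / (1 - stair n) = real n"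
  by (simp add: stair_def divide_simps)

definition stair_count :: "real \<Rightarrow> nat" where
  "stair_count y = (if 0 \<le> y \<and> y < 1 then Suc (nat \<lfloor>y/(1-y)\<rfloor>) else 0)"

lemma stair_le_iff_less_stair_count:
  assumes "y < 1"
  shows "stair n \<le> y \<longleftrightarrow> n < stair_count y"
proof (cases "0 \<le> y")
  case True
  then have "n < stair_count y \<longleftrightarrow> real n \<le> y / (1 - y)"
    using assms by (simp add: stair_count_def less_Suc_eq_le le_nat_iff le_floor_iff)
  then show ?thesis
    using assms stair_le_iff_odds by blast
next
  case False
  then show ?thesis
    using stair_nonneg[of n] by (auto simp: stair_count_def simp del: stair_nonneg)
qed

lemma stair_count_stair [simp]: "stair_count (stair m) = Suc m"
  by (simp add: stair_count_def)

lemma stair_count_between: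
  assumes "stair m < y" "y < stair (Suc m)"
  shows "stair_count y = Suc m"
proof -
  have "y < 1"
    using assms(2) stair_less_1 less_trans by blast
  then have "n < stair_count y \<longleftrightarrow> n < Suc m" for n
    using assms by (auto simp: stair_le_iff_less_stair_count[symmetric] less_Suc_eq_le
        intro: order.trans[of _ "stair m"] dest: order.strict_trans1[of _ y])
  then show ?thesis
    by (metis lessI less_irrefl linorder_neqE_nat)
qed

lemma stair_count_outside: "y < 0 \<or> 1 \<le> y \<Longrightarrow> stair_count y = 0"
  by (auto simp: stair_count_def)

lemma stair_cases:
  fixes y :: real
  obtains "y < 0" | m where "y = stair m" | m where "stair m < y" "y < stair (Suc m)" | "1 \<le> y"
proof -
  consider "y < 0" | "0 \<le> y \<and> y < 1" | "1 \<le> y"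
    by linarith
  then show ?thesis
  proof cases
    case 2
    define m where "m = nat \<lfloor>y/(1-y)\<rfloor>"
    have "stair m \<le> y" "\<not> stair (Suc m) \<le> y"
      using 2 by (simp_all add: stair_le_iff_less_stair_count stair_count_def m_def)
    then show ?thesis
      using that(2,3) by (cases "y = stair m") (auto simp: not_le order.order_iff_strict)
  qed (use that in auto)
qed

lemma between_stairs_iffs:
  assumes "stair i < y" "y < stair (Suc i)"
  shows "stair m \<le> y \<longleftrightarrow> m \<le> i" "stair m < y \<longleftrightarrow> m \<le> i"
    "y < stair m \<longleftrightarrow> i < m" "y \<le> stair m \<longleftrightarrow> i < m"
proof -
  show le: "stair m \<le> y \<longleftrightarrow> m \<le> i" and less: "stair m < y \<longleftrightarrow> m \<le> i"
    using assms stair_le_iff[of m i] stair_less_iff[of m "Suc i"]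
    by (auto simp del: stair_le_iff stair_less_iff)
  show "y < stair m \<longleftrightarrow> i < m"
    by (simp add: not_le[symmetric] le)
  show "y \<le> stair m \<longleftrightarrow> i < m"
    by (simp add: not_less[symmetric] less)
qed

section \<open>Infinite concatenation of paths\<close>

definition join_time :: "nat \<Rightarrow> real \<Rightarrow> real" where
  "join_time n s = (real n + s) / (real n + 1 + s)"

lemma join_time_bounds:
  assumes "0 \<le> s"
  shows "0 \<le> join_time n s" "join_time n s < 1"
  using assms by (auto simp: join_time_def divide_simps)

lemma odds_join_time:
  assumes "0 \<le> s"
  shows "join_time n s / (1 - join_time n s) = real n + s"
proof -
  have "real n + 1 + s > 0"
    using assms by simp
  then show ?thesis
    by (simp add: join_time_def divide_simps)
qed

lemma join_time_inj:
  assumes "0 \<le> s" "s < 1" "0 \<le> s'" "s' < 1" "join_time n s = join_time m s'"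
  shows "n = m \<and> s = s'"
proof -
  have e: "real n + s = real m + s'"
    using assms odds_join_time[of s n] odds_join_time[of s' m] by auto
  then have "\<lfloor>real n + s\<rfloor> = \<lfloor>real m + s'\<rfloor>"
    by simp
  moreover have "\<lfloor>real n + s\<rfloor> = int n" "\<lfloor>real m + s'\<rfloor> = int m"
    using assms by (simp_all add: floor_eq_iff)
  ultimately show ?thesis
    using e by simp
qed

text \<open>
  The piece \<open>gs n\<close> is traversed during \<open>[stair n, stair (n + 1)]\<close>, reaching \<open>gs n s\<close> at time
  \<open>join_time n s\<close>.\<close>
definition infinite_joinpaths :: "(nat \<Rightarrow> real \<Rightarrow> real) \<Rightarrow> real \<Rightarrow> real \<Rightarrow> real" where
  "infinite_joinpaths gs L t = (if t < 1 then gs (nat \<lfloor>t/(1-t)\<rfloor>) (frac (t/(1-t))) else L)"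

lemma infinite_joinpaths_0 [simp]: "infinite_joinpaths gs L 0 = gs 0 0"
  and infinite_joinpaths_1 [simp]: "infinite_joinpaths gs L 1 = L"
  by (simp_all add: infinite_joinpaths_def)

lemma infinite_joinpaths_join_time:
  assumes "s \<in> {0..<1}"
  shows "infinite_joinpaths gs L (join_time n s) = gs n s"
proof -
  have "\<lfloor>real n + s\<rfloor> = int n"
    using assms by (simp add: floor_eq_iff)
  then show ?thesis
    using assms join_time_bounds[of s n]
    by (simp add: infinite_joinpaths_def odds_join_time frac_def)
qed

lemma infinite_joinpaths_eq_join_time:
  assumes "t \<in> {0..<1}"
  obtains n s where "s \<in> {0..<1}" "t = join_time n s" "infinite_joinpaths gs L t = gs n s"
proof -
  define u where "u = t / (1 - t)"
  have "0 \<le> u"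
    using assms by (simp add: u_def)
  then have "real (nat \<lfloor>u\<rfloor>) + frac u = u" "frac u \<in> {0..<1}"
    by (simp_all add: frac_def) (simp add: frac_lt_1[unfolded frac_def])
  moreover have "u / (1 + u) = t"
    using assms by (simp add: u_def field_simps)
  ultimately have "t = join_time (nat \<lfloor>u\<rfloor>) (frac u)"
    unfolding join_time_def by (metis add.commute add.left_commute)
  then show ?thesis
    using that \<open>frac u \<in> {0..<1}\<close> infinite_joinpaths_join_time by metis
qed

lemma half_open_level_infinite_joinpaths:
  "half_open_level (infinite_joinpaths gs L) y = (\<Union>n. join_time n ` half_open_level (gs n) y)"
proof (rule set_eqI)
  fix t
  show "t \<in> half_open_level (infinite_joinpaths gs L) y \<longleftrightarrow>
      t \<in> (\<Union>n. join_time n ` half_open_level (gs n) y)"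
  proof
    assume "t \<in> half_open_level (infinite_joinpaths gs L) y"
    then obtain n s where "s \<in> {0..<1}" "t = join_time n s" "gs n s = y"
      by (metis (mono_tags, lifting) half_open_level_def infinite_joinpaths_eq_join_time
          mem_Collect_eq)
    then show "t \<in> (\<Union>n. join_time n ` half_open_level (gs n) y)"
      by (auto simp: half_open_level_def)
  next
    assume "t \<in> (\<Union>n. join_time n ` half_open_level (gs n) y)"
    then show "t \<in> half_open_level (infinite_joinpaths gs L) y"
      using join_time_bounds by (auto simp: half_open_level_def infinite_joinpaths_join_time)
  qed
qed

lemma has_profile_infinite_joinpaths:
  assumes "\<And>n. has_profile (gs n) (P n)" and "\<And>y n. N y \<le> n \<Longrightarrow> P n y = 0"
  shows "has_profile (infinite_joinpaths gs L) (\<lambda>y. \<Sum>n<N y. P n y)"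
  unfolding has_profile_def
proof
  fix y
  have fin: "\<And>n. finite (half_open_level (gs n) y)" "\<And>n. card (half_open_level (gs n) y) = P n y"
    using assms(1) by (auto simp: has_profile_def)
  have "half_open_level (gs n) y = {}" if "N y \<le> n" for n
    using fin assms(2)[OF that] by (metis card_0_eq)
  then have eq: "half_open_level (infinite_joinpaths gs L) y =
      (\<Union>n\<in>{..<N y}. join_time n ` half_open_level (gs n) y)"
    unfolding half_open_level_infinite_joinpaths by (auto simp: not_less[symmetric])
  have "inj_on (join_time n) (half_open_level (gs n) y)" for n
    by (auto simp: inj_on_def half_open_level_def dest: join_time_inj)
  moreover have
    "join_time i ` half_open_level (gs i) y \<inter> join_time j ` half_open_level (gs j) y = {}"
    if "i \<noteq> j" for i j
    using that by (auto simp: half_open_level_def dest: join_time_inj)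
  ultimately show "finite (half_open_level (infinite_joinpaths gs L) y) \<and>
      card (half_open_level (infinite_joinpaths gs L) y) = (\<Sum>n<N y. P n y)"
    unfolding eq using fin by (simp add: card_UN_disjoint card_image)
qed

lemma odds_between_stairs:
  assumes "stair n \<le> t" "t \<le> stair (Suc n)"
  shows "t < 1" "real n \<le> t/(1-t)" "t/(1-t) \<le> real n + 1"
proof -
  show t1: "t < 1"
    using assms(2) stair_less_1[of "Suc n"] by linarith
  then show "real n \<le> t/(1-t)"
    using assms(1) stair_le_iff_odds by blast
  have "t \<le> (real n + 1)/(real n + 2)"
    using assms(2) by (simp add: stair_def add.commute)
  then show "t/(1-t) \<le> real n + 1"
    using t1 by (simp add: field_simps)
qed

lemma infinite_joinpaths_on_piece:
  assumes "\<And>n. pathfinish (gs n) = pathstart (gs (Suc n))" "stair n \<le> t" "t \<le> stair (Suc n)"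
  shows "infinite_joinpaths gs L t = gs n (t/(1-t) - real n)"
proof -
  note b = odds_between_stairs[OF assms(2,3)]
  show ?thesis
  proof (cases "t/(1-t) = real n + 1")
    case True
    then have "\<lfloor>t/(1-t)\<rfloor> = int n + 1"
      by simp
    moreover have "frac (real n + 1) = 0"
      by (metis Ints_1 Ints_add Ints_of_nat frac_eq_0_iff)
    ultimately show ?thesis
      using b True assms(1)
      by (simp add: infinite_joinpaths_def nat_add_distrib pathstart_def pathfinish_def
          del: frac_eq_0_iff)
  next
    case False
    then have "\<lfloor>t/(1-t)\<rfloor> = int n"
      using b by (simp add: floor_eq_iff)
    then show ?thesis
      using b by (simp add: infinite_joinpaths_def frac_def)
  qed
qed

lemma continuous_on_infinite_joinpaths_piece:
  assumes "path (gs n)" "\<And>n. pathfinish (gs n) = pathstart (gs (Suc n))"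
  shows "continuous_on {stair n..stair (Suc n)} (infinite_joinpaths gs L)"
proof -
  have "continuous_on {stair n..stair (Suc n)} (gs n \<circ> (\<lambda>t. t/(1-t) - real n))"
  proof (rule continuous_on_compose)
    have "1 - t \<noteq> 0" if "t \<in> {stair n..stair (Suc n)}" for t
      using odds_between_stairs(1)[of n t] that by simp
    then show "continuous_on {stair n..stair (Suc n)} (\<lambda>t. t/(1-t) - real n)"
      by (intro continuous_intros) blast
    show "continuous_on ((\<lambda>t. t/(1-t) - real n) ` {stair n..stair (Suc n)}) (gs n)"
    proof (rule continuous_on_subset[OF assms(1)[unfolded path_def]], clarsimp)
      fix t assume "stair n \<le> t" "t \<le> stair (Suc n)"
      from odds_between_stairs[OF this] show "real n \<le> t / (1 - t) \<and> t / (1 - t) - real n \<le> 1"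
        by simp
    qed
  qed
  moreover have "(gs n \<circ> (\<lambda>t. t/(1-t) - real n)) t = infinite_joinpaths gs L t"
    if "t \<in> {stair n..stair (Suc n)}" for t
    using that infinite_joinpaths_on_piece[of gs, OF assms(2)] by auto
  ultimately show ?thesis
    using continuous_on_cong by blast
qed

lemma continuous_on_infinite_joinpaths_initial:
  assumes "\<And>n. path (gs n)" "\<And>n. pathfinish (gs n) = pathstart (gs (Suc n))"
  shows "continuous_on {0..stair n} (infinite_joinpaths gs L)"
proof (induction n)
  case (Suc n)
  have "{0..stair (Suc n)} = {0..stair n} \<union> {stair n..stair (Suc n)}"
    by (rule ivl_disj_un_two_touch(4)[symmetric]) simp_all
  then show ?case
    using continuous_on_closed_Un[OF _ _ Suc
        continuous_on_infinite_joinpaths_piece[of gs, OF assms]]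
    by simp
qed simp

lemma infinite_joinpaths_near_limit:
  assumes "\<And>n s. s \<in> {0..1} \<Longrightarrow> \<bar>gs n s - L\<bar> \<le> B / (real n + 1)" and "0 < e"
  obtains n where "\<And>t. stair n \<le> t \<Longrightarrow> t \<le> 1 \<Longrightarrow> \<bar>infinite_joinpaths gs L t - L\<bar> < e"
proof -
  have B: "0 \<le> B"
    using order_trans[OF abs_ge_zero assms(1)[of 0 0]] by simp
  obtain n :: nat where "B / e < real n"
    using reals_Archimedean2 by blast
  then have "B < e * (real n + 1)"
    using assms(2) by (simp add: field_simps)
  then have Bn: "B / (real n + 1) < e"
    by (simp add: field_simps)
  have "\<bar>infinite_joinpaths gs L t - L\<bar> < e" if "stair n \<le> t" "t < 1" for t
  proof -
    define m where "m = nat \<lfloor>t/(1-t)\<rfloor>"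
    have "n \<le> m"
      using that by (simp add: m_def stair_le_iff_odds le_nat_floor)
    have "\<bar>infinite_joinpaths gs L t - L\<bar> \<le> B / (real m + 1)"
      using that assms(1)[of "frac (t/(1-t))" m] frac_lt_1[of "t/(1-t)"]
      by (simp add: infinite_joinpaths_def m_def less_imp_le)
    also have "\<dots> \<le> B / (real n + 1)"
      using \<open>n \<le> m\<close> B by (simp add: frac_le)
    finally show ?thesis
      using Bn by linarith
  qed
  then show ?thesis
    using that[of n] assms(2) by (metis infinite_joinpaths_1 diff_self abs_zero order_le_less)
qed

lemma path_image_infinite_joinpaths:
  assumes "\<And>n. path_image (gs n) \<subseteq> {a..b}" "L \<in> {a..b}"
  shows "path_image (infinite_joinpaths gs L) \<subseteq> {a..b}"
proof -
  have "infinite_joinpaths gs L t \<in> {a..b}" if "t \<in> {0..1}" for t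
  proof (cases "t = 1")
    case False
    with that have "t \<in> {0..<1}"
      by simp
    then obtain n s where "s \<in> {0..<1}" "infinite_joinpaths gs L t = gs n s"
      by (rule infinite_joinpaths_eq_join_time)
    moreover from \<open>s \<in> {0..<1}\<close> have "gs n s \<in> path_image (gs n)"
      by (simp add: path_image_def)
    ultimately show ?thesis
      using assms(1)[of n] by auto
  qed (use assms in simp)
  then show ?thesis
    by (auto simp: path_image_def)
qed

lemma path_infinite_joinpaths:
  assumes "\<And>n. path (gs n)" "\<And>n. pathfinish (gs n) = pathstart (gs (Suc n))"
    and "\<And>n s. s \<in> {0..1} \<Longrightarrow> \<bar>gs n s - L\<bar> \<le> B / (real n + 1)"
  shows "path (infinite_joinpaths gs L)"
  unfolding path_def continuous_on_iff
proof (intro ballI allI impI)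
  fix x e :: real
  assume x: "x \<in> {0..1}" and e: "0 < e"
  let ?f = "infinite_joinpaths gs L"
  show "\<exists>d>0. \<forall>x'\<in>{0..1}. dist x' x < d \<longrightarrow> dist (?f x') (?f x) < e"
  proof (cases "x < 1")
    case True
    obtain n where "x / (1 - x) < real n"
      using reals_Archimedean2 by blast
    then have xn: "x < stair n"
      using True stair_le_iff_odds[of x n] by linarith
    then obtain d where d: "d > 0" "\<forall>x'\<in>{0..stair n}. dist x' x < d \<longrightarrow> dist (?f x') (?f x) < e"
      using x e continuous_on_infinite_joinpaths_initial[of gs, OF assms(1,2), of n]
      unfolding continuous_on_iff by (metis atLeastAtMost_iff less_imp_le)
    show ?thesis
    proof (intro exI[of _ "min d (stair n - x)"] conjI ballI impI)
      fix x' assume "x' \<in> {0..1}" "dist x' x < min d (stair n - x)"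
      then show "dist (?f x') (?f x) < e"
        using d by (auto simp: dist_real_def)
    qed (use d xn in simp)
  next
    case False
    then have x1: "x = 1"
      using x by simp
    obtain n where n: "\<And>t. stair n \<le> t \<Longrightarrow> t \<le> 1 \<Longrightarrow> \<bar>?f t - L\<bar> < e"
      using infinite_joinpaths_near_limit[of gs L B, OF assms(3) e] by blast
    show ?thesis
    proof (intro exI[of _ "1 - stair n"] conjI ballI impI)
      fix x' assume "x' \<in> {0..1}" "dist x' x < 1 - stair n"
      then show "dist (?f x') (?f x) < e"
        using x1 n[of x'] by (simp add: dist_real_def)
    qed simp
  qed
qed

section \<open>A block with odd level counts\<close>

definition tooth :: "nat \<Rightarrow> nat \<Rightarrow> real \<Rightarrow> real" where
  "tooth d j = linepath (stair j) (stair (j + d)) +++ linepath (stair (j + d)) (stair (Suc j))"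

definition tooth_profile :: "nat \<Rightarrow> nat \<Rightarrow> real \<Rightarrow> nat" where
  "tooth_profile d j y =
    of_bool (stair j \<le> y \<and> y < stair (j + d)) + of_bool (stair (Suc j) < y \<and> y \<le> stair (j + d))"

lemma pathstart_tooth [simp]: "pathstart (tooth d j) = stair j"
  and pathfinish_tooth [simp]: "pathfinish (tooth d j) = stair (Suc j)"
  by (simp_all add: tooth_def)

lemma has_profile_tooth:
  assumes "2 \<le> d"
  shows "has_profile (tooth d j) (tooth_profile d j)"
proof -
  have "stair j < stair (j + d)" "stair (Suc j) < stair (j + d)"
    using assms by simp_all
  then show ?thesis
    unfolding tooth_def tooth_profile_def
    by (intro has_profile_joinpaths has_profile_linepath_up has_profile_linepath_down) simp_all
qed

lemma path_image_tooth: "1 \<le> d \<Longrightarrow> path_image (tooth d j) \<subseteq> {stair j..1}"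
  by (auto simp: tooth_def path_image_join closed_segment_eq_real_ivl)

lemma tooth_profile_eq_0:
  assumes "stair_count y \<le> n"
  shows "tooth_profile d n y = 0"
proof (cases "y < 1")
  case True
  then have "\<not> stair n \<le> y"
    using assms stair_le_iff_less_stair_count by (simp add: not_less)
  moreover have "stair n \<le> stair (Suc n)"
    by simp
  ultimately show ?thesis
    by (auto simp: tooth_profile_def simp del: stair_le_iff)
next
  case False
  then show ?thesis
    using stair_less_1[of "n + d"] by (auto simp: tooth_profile_def simp del: stair_less_1)
qed

text \<open>
  The teeth accumulate at 1, so that every level near 1 is crossed \<open>2 d - 1\<close> times although 1
  itself is reached only at the end.\<close>
definition saw :: "nat \<Rightarrow> real \<Rightarrow> real" where
  "saw d = infinite_joinpaths (tooth d) 1"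

lemma pathstart_saw [simp]: "pathstart (saw d) = 0"
  and pathfinish_saw [simp]: "pathfinish (saw d) = 1"
  by (simp_all add: saw_def pathstart_def pathfinish_def tooth_def joinpaths_def linepath_def)

lemma has_profile_saw:
  "2 \<le> d \<Longrightarrow> has_profile (saw d) (\<lambda>y. \<Sum>j<stair_count y. tooth_profile d j y)"
  unfolding saw_def
  by (rule has_profile_infinite_joinpaths[OF has_profile_tooth tooth_profile_eq_0])

lemma path_image_saw: "1 \<le> d \<Longrightarrow> path_image (saw d) \<subseteq> {0..1}"
  unfolding saw_def
proof (rule path_image_infinite_joinpaths)
  show "path_image (tooth d n) \<subseteq> {0..1}" if "1 \<le> d" for n
  proof -
    have "{stair n..1} \<subseteq> {0..1::real}"
      by simp
    then show ?thesis
      using path_image_tooth[OF that, of n] by blast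
  qed
qed simp_all

lemma path_saw:
  assumes "1 \<le> d"
  shows "path (saw d)"
  unfolding saw_def
proof (rule path_infinite_joinpaths[where B = 1])
  fix n and s :: real
  assume "s \<in> {0..1}"
  then have "tooth d n s \<in> {stair n..1}"
    using path_image_tooth[OF assms, of n] by (auto simp: path_image_def image_subset_iff)
  then show "\<bar>tooth d n s - 1\<bar> \<le> 1 / (real n + 1)"
    using one_minus_stair[of n] by simp
qed (simp_all add: tooth_def)

fun prepend_humps :: "nat \<Rightarrow> (real \<Rightarrow> real) \<Rightarrow> real \<Rightarrow> real" where
  "prepend_humps 0 g = g"
| "prepend_humps (Suc k) g = hump 0 (stair (Suc k)) +++ prepend_humps k g"

definition humps_profile :: "nat \<Rightarrow> real \<Rightarrow> nat" where
  "humps_profile k y = (\<Sum>i\<in>{1..k}. of_bool (0 \<le> y \<and> y < stair i) + of_bool (0 < y \<and> y \<le> stair i))"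

lemma pathstart_prepend_humps [simp]: "pathstart g = 0 \<Longrightarrow> pathstart (prepend_humps k g) = 0"
  by (induction k) simp_all

lemma pathfinish_prepend_humps [simp]: "pathfinish (prepend_humps k g) = pathfinish g"
  by (induction k) simp_all

lemma has_profile_prepend_humps:
  assumes "has_profile g P" "pathstart g = 0"
  shows "has_profile (prepend_humps k g) (\<lambda>y. P y + humps_profile k y)"
proof (induction k)
  case 0
  then show ?case
    using assms by (simp add: humps_profile_def)
next
  case (Suc k)
  have "has_profile (hump 0 (stair (Suc k)))
      (\<lambda>y. of_bool (0 \<le> y \<and> y < stair (Suc k)) + of_bool (0 < y \<and> y \<le> stair (Suc k)))"
    by (rule has_profile_hump) simp
  from has_profile_joinpaths[OF this Suc] show ?case
    using assms(2) by (simp add: humps_profile_def add_ac)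
qed

lemma path_prepend_humps: "path g \<Longrightarrow> pathstart g = 0 \<Longrightarrow> path (prepend_humps k g)"
  by (induction k) (simp_all add: path_hump)

lemma path_image_prepend_humps:
  "path_image g \<subseteq> {0..1} \<Longrightarrow> pathstart g = 0 \<Longrightarrow> path_image (prepend_humps k g) \<subseteq> {0..1}"
  by (induction k) (auto simp: path_image_join path_image_hump less_imp_le)

definition block_profile :: "nat \<Rightarrow> real \<Rightarrow> nat" where
  "block_profile d y = d * of_bool (y = 0) + (2 * d - 1) * of_bool (0 < y \<and> y < 1)"

lemma sum_tooth_profile_eq_card:
  "(\<Sum>j<N. tooth_profile d j y) = card {j \<in> {..<N}. stair j \<le> y \<and> y < stair (j + d)}
      + card {j \<in> {..<N}. stair (Suc j) < y \<and> y \<le> stair (j + d)}"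
  by (simp add: tooth_profile_def sum.distrib Int_def conj_commute)

lemma humps_profile_eq_card:
  "humps_profile k y =
    card {i \<in> {1..k}. 0 \<le> y \<and> y < stair i} + card {i \<in> {1..k}. 0 < y \<and> y \<le> stair i}"
  by (simp add: humps_profile_def sum.distrib Int_def conj_commute)

lemma saw_humps_count_at_stair:
  assumes "2 \<le> d"
  shows "(\<Sum>j<stair_count (stair i). tooth_profile d j (stair i)) + humps_profile (d - 1) (stair i)
      = (if i = 0 then d else 2 * d - 1)"
proof -
  have "{j \<in> {..<Suc i}. stair j \<le> stair i \<and> stair i < stair (j + d)} = {i + 1 - d..i}"
    "{j \<in> {..<Suc i}. stair (Suc j) < stair i \<and> stair i \<le> stair (j + d)} = {i - d..<i - 1}"
    "{k \<in> {1..d - 1}. 0 \<le> stair i \<and> stair i < stair k} = {i + 1..d - 1}"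
    "{k \<in> {1..d - 1}. 0 < stair i \<and> stair i \<le> stair k} = (if i = 0 then {} else {i..d - 1})"
    by auto
  then have "(\<Sum>j<stair_count (stair i). tooth_profile d j (stair i))
        + humps_profile (d - 1) (stair i)
      = card {i + 1 - d..i} + card {i - d..<i - 1}
        + (card {i + 1..d - 1} + card (if i = 0 then {} else {i..d - 1}))"
    unfolding sum_tooth_profile_eq_card humps_profile_eq_card stair_count_stair by (simp only:)
  also have "\<dots> = (if i = 0 then d else 2 * d - 1)"
    using assms by (cases "i < d") auto
  finally show ?thesis .
qed

lemma saw_humps_count_between_stairs:
  assumes "2 \<le> d" "stair i < y" "y < stair (Suc i)"
  shows "(\<Sum>j<stair_count y. tooth_profile d j y) + humps_profile (d - 1) y = 2 * d - 1"
proof -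
  note iffs = between_stairs_iffs[OF assms(2,3)]
  have "0 < y"
    using assms(2) stair_nonneg[of i] by linarith
  then have "{j \<in> {..<Suc i}. stair j \<le> y \<and> y < stair (j + d)} = {i + 1 - d..i}"
    "{j \<in> {..<Suc i}. stair (Suc j) < y \<and> y \<le> stair (j + d)} = {i + 1 - d..<i}"
    "{k \<in> {1..d - 1}. 0 \<le> y \<and> y < stair k} = {i + 1..d - 1}"
    "{k \<in> {1..d - 1}. 0 < y \<and> y \<le> stair k} = {i + 1..d - 1}"
    by (auto simp: iffs)
  then have "(\<Sum>j<stair_count y. tooth_profile d j y) + humps_profile (d - 1) y
      = card {i + 1 - d..i} + card {i + 1 - d..<i} + (card {i + 1..d - 1} + card {i + 1..d - 1})"
    unfolding sum_tooth_profile_eq_card humps_profile_eq_card stair_count_between[OF assms(2,3)]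
    by (simp only:)
  also have "\<dots> = 2 * d - 1"
    using assms(1) by (cases "i < d") auto
  finally show ?thesis .
qed

lemma saw_humps_count:
  assumes "2 \<le> d"
  shows "(\<Sum>j<stair_count y. tooth_profile d j y) + humps_profile (d - 1) y = block_profile d y"
proof (cases y rule: stair_cases)
  case outside: 1
  then show ?thesis
    by (simp add: stair_count_outside humps_profile_def block_profile_def)
next
  case (2 m)
  then show ?thesis
    using saw_humps_count_at_stair[OF assms, of m] by (simp add: block_profile_def)
next
  case (3 m)
  moreover have "0 < y" "y < 1"
    using 3 stair_nonneg[of m] stair_less_1[of "Suc m"] by linarith+
  ultimately show ?thesis
    using saw_humps_count_between_stairs[OF assms] by (simp add: block_profile_def)
next
  case 4
  have "\<not> y \<le> stair i" "\<not> y < stair i" for i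
    using 4 stair_less_1[of i] by linarith+
  with 4 show ?thesis
    by (simp add: stair_count_outside humps_profile_def block_profile_def)
qed

text \<open>
  The humps of heights \<open>stair 1, \<dots>, stair (d - 1)\<close> make up for the teeth of the saw missing
  near 0.\<close>
definition base_block :: "nat \<Rightarrow> real \<Rightarrow> real" where
  "base_block d = (if d \<le> 1 then linepath 0 1 else prepend_humps (d - 1) (saw d))"

lemma pathstart_base_block [simp]: "pathstart (base_block d) = 0"
  and pathfinish_base_block [simp]: "pathfinish (base_block d) = 1"
  by (simp_all add: base_block_def)

lemma path_base_block: "path (base_block d)"
  by (simp add: base_block_def path_prepend_humps path_saw)

lemma path_image_base_block: "path_image (base_block d) \<subseteq> {0..1}"
  by (simp add: base_block_def path_image_prepend_humps path_image_saw closed_segment_eq_real_ivl)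

lemma has_profile_base_block:
  assumes "1 \<le> d"
  shows "has_profile (base_block d) (block_profile d)"
proof (cases "d = 1")
  case True
  have "has_profile (linepath 0 1) (\<lambda>y. of_bool (0 \<le> y \<and> y < 1))"
    by (rule has_profile_linepath_up) simp
  then show ?thesis
    by (simp add: base_block_def block_profile_def True has_profile_def)
next
  case False
  then have "2 \<le> d"
    using assms by simp
  from has_profile_prepend_humps[OF has_profile_saw[OF this] pathstart_saw]
  have "has_profile (prepend_humps (d - 1) (saw d)) (block_profile d)"
    by (rule has_profile_cong) (rule saw_humps_count[OF \<open>2 \<le> d\<close>])
  then show ?thesis
    using \<open>2 \<le> d\<close> by (simp add: base_block_def)
qed

definition climb :: "nat \<Rightarrow> real \<Rightarrow> real \<Rightarrow> real \<Rightarrow> real" where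
  "climb d c b = rescale_path c b (base_block d)"

definition arrive :: "nat \<Rightarrow> real \<Rightarrow> real \<Rightarrow> real \<Rightarrow> real" where
  "arrive d a c = reversepath (rescale_path c a (base_block d))"

lemma pathstart_climb [simp]: "pathstart (climb d c b) = c"
  and pathfinish_climb [simp]: "pathfinish (climb d c b) = b"
  and pathstart_arrive [simp]: "pathstart (arrive d a c) = a"
  and pathfinish_arrive [simp]: "pathfinish (arrive d a c) = c"
  using pathstart_base_block[of d] pathfinish_base_block[of d]
  by (simp_all add: climb_def arrive_def rescale_path_def pathstart_def pathfinish_def
      reversepath_def)

lemma path_climb: "path (climb d c b)"
  and path_arrive: "path (arrive d a c)"
  by (simp_all add: climb_def arrive_def path_rescale_path path_base_block)

lemma path_image_climb: "c \<le> b \<Longrightarrow> path_image (climb d c b) \<subseteq> {c..b}"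
  using path_image_rescale_path[OF path_image_base_block, of c b d]
  by (simp add: climb_def closed_segment_eq_real_ivl)

lemma path_image_arrive: "a \<le> c \<Longrightarrow> path_image (arrive d a c) \<subseteq> {a..c}"
  using path_image_rescale_path[OF path_image_base_block, of c a d]
  by (cases "a = c") (simp_all add: arrive_def closed_segment_eq_real_ivl)

lemma has_profile_climb:
  assumes "1 \<le> d" "c < b"
  shows "has_profile (climb d c b)
    (\<lambda>y. d * of_bool (y = c) + (2 * d - 1) * of_bool (c < y \<and> y < b))"
proof -
  have P: "has_profile (climb d c b) (\<lambda>y. block_profile d ((y - c) / (b - c)))"
    unfolding climb_def
    by (rule has_profile_rescale_path[OF has_profile_base_block]) (use assms in simp_all)
  have "(y - c) / (b - c) = 0 \<longleftrightarrow> y = c" "0 < (y - c) / (b - c) \<longleftrightarrow> c < y"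
    "(y - c) / (b - c) < 1 \<longleftrightarrow> y < b" for y
    using assms(2) by (simp_all add: divide_simps)
  then show ?thesis
    by (intro has_profile_cong[OF P]) (simp add: block_profile_def)
qed

lemma has_profile_arrive:
  assumes "1 \<le> d" "a < c"
  shows "has_profile (arrive d a c)
    (\<lambda>y. (d - 1) * of_bool (y = c) + (2 * d - 1) * of_bool (a < y \<and> y < c) + of_bool (y = a))"
proof -
  have "has_profile (rescale_path c a (base_block d)) (\<lambda>y. block_profile d ((y - c) / (a - c)))"
    by (rule has_profile_rescale_path[OF has_profile_base_block]) (use assms in simp_all)
  from has_profile_reversepath[OF this]
  have P: "has_profile (arrive d a c)
      (\<lambda>y. block_profile d ((y - c) / (a - c)) + of_bool (a = y) - of_bool (c = y))"
    using pathstart_arrive pathfinish_arrive by (simp add: arrive_def)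
  have "(y - c) / (a - c) = 0 \<longleftrightarrow> y = c" "0 < (y - c) / (a - c) \<longleftrightarrow> y < c"
    "(y - c) / (a - c) < 1 \<longleftrightarrow> a < y" for y
    using assms(2) by (simp_all add: divide_simps)
  then show ?thesis
    using assms by (intro has_profile_cong[OF P]) (auto simp: block_profile_def)
qed

section \<open>Units and the staircase\<close>

fun repeat_join :: "nat \<Rightarrow> (real \<Rightarrow> real) \<Rightarrow> (real \<Rightarrow> real) \<Rightarrow> real \<Rightarrow> real" where
  "repeat_join 0 h g = g"
| "repeat_join (Suc j) h g = h +++ repeat_join j h g"

lemma pathstart_repeat_join [simp]:
  "pathstart h = pathstart g \<Longrightarrow> pathstart (repeat_join j h g) = pathstart g"
  by (cases j) simp_all

lemma pathfinish_repeat_join [simp]: "pathfinish (repeat_join j h g) = pathfinish g"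
  by (induction j) simp_all

lemma has_profile_repeat_join:
  assumes "has_profile h Ph" "has_profile g Pg"
    and "pathstart h = pathstart g" "pathfinish h = pathstart g"
  shows "has_profile (repeat_join j h g) (\<lambda>y. j * Ph y + Pg y)"
proof (induction j)
  case (Suc j)
  from has_profile_joinpaths[OF assms(1) Suc] show ?case
    using assms(3,4) by (simp add: add.assoc)
qed (use assms in simp)

lemma path_repeat_join:
  "path h \<Longrightarrow> path g \<Longrightarrow> pathstart h = pathstart g \<Longrightarrow> pathfinish h = pathstart g
    \<Longrightarrow> path (repeat_join j h g)"
  by (induction j) simp_all

lemma path_image_repeat_join:
  "path_image h \<subseteq> S \<Longrightarrow> path_image g \<subseteq> S \<Longrightarrow> pathstart h = pathstart g \<Longrightarrow> pathfinish h = pathstart g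
    \<Longrightarrow> path_image (repeat_join j h g) \<subseteq> S"
  by (induction j) (simp_all add: path_image_join)

text \<open>
  Trading visits of the middle value \<open>c\<close> for humps, a unit from \<open>a\<close> to \<open>b\<close> hits every level
  strictly between them \<open>2 D - 1\<close> times, \<open>a\<close> any number \<open>nb + 1 \<le> D\<close> of times and \<open>b\<close>
  any number \<open>nt < D\<close> of times in \<open>[0, 1)\<close>.\<close>
definition unit_path :: "real \<Rightarrow> real \<Rightarrow> real \<Rightarrow> nat \<Rightarrow> nat \<Rightarrow> nat \<Rightarrow> real \<Rightarrow> real" where
  "unit_path a c b D nb nt =
    repeat_join nb (hump a c) (arrive (D - nb) a c) +++
    repeat_join nt (hump c b) (climb (D - nt) c b)"

definition unit_profile :: "real \<Rightarrow> real \<Rightarrow> nat \<Rightarrow> nat \<Rightarrow> nat \<Rightarrow> real \<Rightarrow> nat" where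
  "unit_profile a b D nb nt y =
    (nb + 1) * of_bool (y = a) + (2 * D - 1) * of_bool (a < y \<and> y < b) + nt * of_bool (y = b)"

lemma pathstart_unit_path [simp]: "pathstart (unit_path a c b D nb nt) = a"
  and pathfinish_unit_path [simp]: "pathfinish (unit_path a c b D nb nt) = b"
  by (simp_all add: unit_path_def)

lemma path_unit_path: "path (unit_path a c b D nb nt)"
  by (simp add: unit_path_def path_repeat_join path_hump path_arrive path_climb)

lemma path_image_unit_path:
  assumes "a \<le> c" "c \<le> b"
  shows "path_image (unit_path a c b D nb nt) \<subseteq> {a..b}"
proof -
  have ac: "{a..c} \<subseteq> {a..b}" and cb: "{c..b} \<subseteq> {a..b}"
    using assms by auto
  have "path_image (repeat_join nb (hump a c) (arrive (D - nb) a c)) \<subseteq> {a..b}"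
    using assms ac order.trans[OF path_image_arrive[OF assms(1)] ac]
    by (intro path_image_repeat_join) (simp_all add: path_image_hump)
  moreover have "path_image (repeat_join nt (hump c b) (climb (D - nt) c b)) \<subseteq> {a..b}"
    using assms cb order.trans[OF path_image_climb[OF assms(2)] cb]
    by (intro path_image_repeat_join) (simp_all add: path_image_hump)
  ultimately show ?thesis
    by (simp add: unit_path_def path_image_join)
qed

lemma has_profile_unit_path:
  assumes "a < c" "c < b" "nb < D" "nt < D"
  shows "has_profile (unit_path a c b D nb nt) (unit_profile a b D nb nt)"
proof -
  have "has_profile (repeat_join nb (hump a c) (arrive (D - nb) a c))
     (\<lambda>y. nb * (of_bool (a \<le> y \<and> y < c) + of_bool (a < y \<and> y \<le> c)) + ((D - nb - 1) * of_bool (y = c)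
        + (2 * (D - nb) - 1) * of_bool (a < y \<and> y < c) + of_bool (y = a)))" (is "has_profile _ ?P")
    using assms by (intro has_profile_repeat_join has_profile_hump has_profile_arrive) simp_all
  moreover have "has_profile (repeat_join nt (hump c b) (climb (D - nt) c b))
     (\<lambda>y. nt * (of_bool (c \<le> y \<and> y < b) + of_bool (c < y \<and> y \<le> b))
        + ((D - nt) * of_bool (y = c) + (2 * (D - nt) - 1) * of_bool (c < y \<and> y < b)))"
    (is "has_profile _ ?Q")
    using assms by (intro has_profile_repeat_join has_profile_hump has_profile_climb) simp_all
  ultimately have "has_profile (unit_path a c b D nb nt) (\<lambda>y. ?P y + ?Q y)"
    unfolding unit_path_def by (rule has_profile_joinpaths) simp
  moreover have "?P y + ?Q y = unit_profile a b D nb nt y" for y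
  proof -
    consider "y < a" | "y = a" | "a < y \<and> y < c" | "y = c" | "c < y \<and> y < b" | "y = b" | "b < y"
      by linarith
    then show ?thesis
      using assms by cases (auto simp: unit_profile_def)
  qed
  ultimately show ?thesis
    by (rule has_profile_cong)
qed

definition admissible :: "(nat \<Rightarrow> nat) \<Rightarrow> (nat \<Rightarrow> nat) \<Rightarrow> bool" where
  "admissible D v \<longleftrightarrow> (\<forall>k. 1 \<le> D k) \<and> (\<forall>m. 1 \<le> v (Suc m) \<and> v (Suc m) + 1 \<le> D m + D (Suc m))"

text \<open>
  At \<open>stair (m + 1)\<close> unit \<open>m\<close> ends and unit \<open>m + 1\<close> starts; the \<open>v (m + 1) - 1\<close> further visits
  of this level are split between the top of unit \<open>m\<close> and the bottom of unit \<open>m + 1\<close>.\<close>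
definition top_humps :: "(nat \<Rightarrow> nat) \<Rightarrow> (nat \<Rightarrow> nat) \<Rightarrow> nat \<Rightarrow> nat" where
  "top_humps D v k = min (v (Suc k) - 1) (D k - 1)"

definition bottom_humps :: "(nat \<Rightarrow> nat) \<Rightarrow> (nat \<Rightarrow> nat) \<Rightarrow> nat \<Rightarrow> nat" where
  "bottom_humps D v k = (if k = 0 then 0 else v k - 1 - top_humps D v (k - 1))"

lemma top_humps_less:
  "admissible D v \<Longrightarrow> top_humps D v k < D k"
  by (auto simp: admissible_def top_humps_def dest: spec[of _ k])

lemma bottom_humps_less:
  assumes "admissible D v"
  shows "bottom_humps D v k < D k"
proof (cases k)
  case 0
  then show ?thesis
    using assms by (auto simp: admissible_def bottom_humps_def Suc_le_eq)
next
  case (Suc m)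
  have "1 \<le> D m" "1 \<le> D (Suc m)" "1 \<le> v (Suc m)" "v (Suc m) + 1 \<le> D m + D (Suc m)"
    using assms by (auto simp: admissible_def)
  then show ?thesis
    using Suc by (simp add: bottom_humps_def top_humps_def)
qed

lemma humps_at_stair:
  "admissible D v \<Longrightarrow> bottom_humps D v (Suc m) + 1 + top_humps D v m = v (Suc m)"
  by (auto simp: admissible_def bottom_humps_def top_humps_def dest: spec[of _ m])

definition mid_stair :: "nat \<Rightarrow> real" where
  "mid_stair k = (stair k + stair (Suc k)) / 2"

lemma mid_stair_bounds: "stair k < mid_stair k" "mid_stair k < stair (Suc k)"
  using stair_less_iff[of k "Suc k"] by (simp_all add: mid_stair_def)

abbreviation staircase_step :: "(nat \<Rightarrow> nat) \<Rightarrow> (nat \<Rightarrow> nat) \<Rightarrow> nat \<Rightarrow> real \<Rightarrow> real" where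
  "staircase_step D v k \<equiv>
    unit_path (stair k) (mid_stair k) (stair (Suc k)) (D k) (bottom_humps D v k) (top_humps D v k)"

abbreviation staircase_step_profile :: "(nat \<Rightarrow> nat) \<Rightarrow> (nat \<Rightarrow> nat) \<Rightarrow> nat \<Rightarrow> real \<Rightarrow> nat" where
  "staircase_step_profile D v k \<equiv>
    unit_profile (stair k) (stair (Suc k)) (D k) (bottom_humps D v k) (top_humps D v k)"

definition staircase :: "(nat \<Rightarrow> nat) \<Rightarrow> (nat \<Rightarrow> nat) \<Rightarrow> real \<Rightarrow> real" where
  "staircase D v = infinite_joinpaths (staircase_step D v) 1"

definition staircase_profile :: "(nat \<Rightarrow> nat) \<Rightarrow> (nat \<Rightarrow> nat) \<Rightarrow> real \<Rightarrow> nat" where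
  "staircase_profile D v y = (\<Sum>k<stair_count y. staircase_step_profile D v k y)"

lemma pathstart_staircase [simp]: "pathstart (staircase D v) = 0"
  and pathfinish_staircase [simp]: "pathfinish (staircase D v) = 1"
  using pathstart_unit_path by (simp_all add: staircase_def pathstart_def pathfinish_def)

lemma unit_profile_eq_0:
  assumes "stair_count y \<le> k"
  shows "unit_profile (stair k) (stair (Suc k)) D nb nt y = 0"
proof (cases "y < 1")
  case True
  then have "y < stair k"
    using assms stair_le_iff_less_stair_count[of y k] by linarith
  then show ?thesis
    using stair_le_iff[of k "Suc k"] by (auto simp: unit_profile_def simp del: stair_le_iff)
next
  case False
  then show ?thesis
    using stair_less_1[of k] stair_less_1[of "Suc k"]
    by (auto simp: unit_profile_def simp del: stair_less_1)
qed

lemma has_profile_staircase: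
  "admissible D v \<Longrightarrow> has_profile (staircase D v) (staircase_profile D v)"
  unfolding staircase_def staircase_profile_def
  by (intro has_profile_infinite_joinpaths has_profile_unit_path unit_profile_eq_0 mid_stair_bounds
      top_humps_less bottom_humps_less)

lemma path_staircase: "path (staircase D v)"
  unfolding staircase_def
proof (rule path_infinite_joinpaths[where B = 1])
  fix n and s :: real
  assume "s \<in> {0..1}"
  moreover have "path_image (staircase_step D v n) \<subseteq> {stair n..stair (Suc n)}"
    using mid_stair_bounds[of n] by (intro path_image_unit_path) simp_all
  moreover have "{stair n..stair (Suc n)} \<subseteq> {stair n..1}"
    using stair_less_1[of "Suc n"] by auto
  ultimately have "staircase_step D v n s \<in> {stair n..1}"
    unfolding path_image_def by blast
  then show "\<bar>staircase_step D v n s - 1\<bar> \<le> 1 / (real n + 1)"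
    using one_minus_stair[of n] by simp
qed (simp_all add: path_unit_path)

lemma staircase_profile_at_stair:
  "staircase_profile D v (stair m) =
    bottom_humps D v m + 1 + (if m = 0 then 0 else top_humps D v (m - 1))"
proof -
  have "staircase_step_profile D v k (stair m) = 0" if "Suc k < m" for k
    using that by (auto simp: unit_profile_def)
  then have "(\<Sum>k<m - 1. staircase_step_profile D v k (stair m)) = 0"
    by simp
  then show ?thesis
    using stair_count_stair[of 0] by (cases m) (auto simp: staircase_profile_def unit_profile_def)
qed

lemma staircase_profile_between_stairs:
  assumes "stair m < y" "y < stair (Suc m)"
  shows "staircase_profile D v y = 2 * D m - 1"
proof -
  have "staircase_step_profile D v k y = 0" if "k < m" for k
  proof -
    have "stair (Suc k) \<le> stair m" "stair k < stair (Suc k)"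
      using that by simp_all
    then have "stair k \<noteq> y" "stair (Suc k) \<noteq> y" "\<not> y < stair (Suc k)"
      using assms(1) by linarith+
    then show ?thesis
      by (auto simp: unit_profile_def)
  qed
  then show ?thesis
    using assms by (simp add: staircase_profile_def stair_count_between unit_profile_def)
qed

lemma staircase_profile_0 [simp]: "staircase_profile D v 0 = 1"
  using staircase_profile_at_stair[of D v 0] by (simp add: bottom_humps_def)

lemma staircase_profile_stair_Suc:
  "admissible D v \<Longrightarrow> staircase_profile D v (stair (Suc m)) = v (Suc m)"
  using staircase_profile_at_stair[of D v "Suc m"] humps_at_stair[of D v m] by simp

lemma staircase_profile_outside: "y < 0 \<or> 1 \<le> y \<Longrightarrow> staircase_profile D v y = 0"
  by (simp add: staircase_profile_def stair_count_outside)

lemma Omega_staircase: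
  assumes "admissible D v"
  shows "Omega (staircase D v) = enat ` ({0, 1} \<union> range (\<lambda>m. 2 * D m - 1) \<union> range (\<lambda>m. v (Suc m)))"
proof -
  define c where "c y = staircase_profile D v y + of_bool (1 = y)" for y
  have counts: "c y \<in> {0, 1} \<union> range (\<lambda>m. 2 * D m - 1) \<union> range (\<lambda>m. v (Suc m))" for y
  proof (cases y rule: stair_cases)
    case (2 m)
    then have "y \<noteq> 1"
      using stair_less_1[of m] by linarith
    with 2 show ?thesis
      using assms by (cases m) (auto simp: c_def staircase_profile_stair_Suc)
  next
    case (3 m)
    then have "y \<noteq> 1"
      using stair_less_1[of "Suc m"] by linarith
    with 3 show ?thesis
      by (simp add: c_def staircase_profile_between_stairs)
  qed (auto simp: c_def staircase_profile_outside)
  have "c 2 = 0" "c 0 = 1" "c (mid_stair m) = 2 * D m - 1" "c (stair (Suc m)) = v (Suc m)" for m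
    using assms mid_stair_bounds[of m] stair_less_1[of m] stair_less_1[of "Suc m"]
    by (auto simp: c_def staircase_profile_outside staircase_profile_between_stairs
        staircase_profile_stair_Suc simp del: stair_less_1)
  then have witnesses: "c ` ({2, 0} \<union> range mid_stair \<union> range (\<lambda>m. stair (Suc m)))
      = {0, 1} \<union> range (\<lambda>m. 2 * D m - 1) \<union> range (\<lambda>m. v (Suc m))"
    by (simp add: image_Un image_image)
  show ?thesis
    by (rule Omega_eqI[OF has_profile_staircase[OF assms] _ counts witnesses]) (simp add: c_def)
qed

text \<open>
  Dipping from \<open>stair 1\<close> to 0 before the staircase and returning to \<open>stair 1\<close> afterwards adds one
  visit to every positive level up to 1, which turns the odd counts \<open>2 D m - 1\<close> into even ones.\<close>
definition dipped_staircase :: "(nat \<Rightarrow> nat) \<Rightarrow> (nat \<Rightarrow> nat) \<Rightarrow> real \<Rightarrow> real" where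
  "dipped_staircase D v = linepath (stair 1) 0 +++ (staircase D v +++ linepath 1 (stair 1))"

lemma path_dipped_staircase: "path (dipped_staircase D v)"
  by (simp add: dipped_staircase_def path_staircase)

lemma has_profile_dipped_staircase:
  assumes "admissible D v"
  shows "has_profile (dipped_staircase D v)
    (\<lambda>y. of_bool (0 < y \<and> y \<le> stair 1) + (staircase_profile D v y + of_bool (stair 1 < y \<and> y \<le> 1)))"
  unfolding dipped_staircase_def
  by (intro has_profile_joinpaths has_profile_linepath_down has_profile_staircase assms) simp_all

lemma dipped_staircase_count:
  assumes "admissible D v"
    and c: "\<And>y. c y = of_bool (0 < y \<and> y \<le> stair 1)
      + (staircase_profile D v y + of_bool (stair 1 < y \<and> y \<le> 1)) + of_bool (stair 1 = y)"
  shows "c 0 = 1" "c (stair 1) = v 1 + 2" "c (stair (Suc (Suc m))) = v (Suc (Suc m)) + 1"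
    and "stair m < y \<Longrightarrow> y < stair (Suc m) \<Longrightarrow> c y = 2 * D m"
    and "y < 0 \<or> 1 < y \<Longrightarrow> c y = 0" "c 1 = 1"
proof -
  have "0 < stair 1" "stair 1 < 1" "stair 1 < stair (Suc (Suc m))"
    by simp_all
  then show "c 0 = 1" "c (stair 1) = v 1 + 2" "c (stair (Suc (Suc m))) = v (Suc (Suc m)) + 1"
    "y < 0 \<or> 1 < y \<Longrightarrow> c y = 0" "c 1 = 1"
    using staircase_profile_stair_Suc[OF assms(1)]
    by (auto simp: c staircase_profile_outside simp del: stair_less_1 stair_pos_iff stair_less_iff)
  assume y: "stair m < y" "y < stair (Suc m)"
  have "1 \<le> D m"
    using assms(1) by (simp add: admissible_def)
  moreover have "m = 0 \<or> stair 1 < y \<and> y < 1"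
    using y stair_le_iff[of 1 m] stair_less_1[of "Suc m"]
    by (auto simp del: stair_le_iff stair_less_1)
  ultimately show "c y = 2 * D m"
    using y staircase_profile_between_stairs[OF y] by (auto simp: c)
qed

lemma Omega_dipped_staircase:
  assumes "admissible D v"
  shows "Omega (dipped_staircase D v)
    = enat ` ({0, 1} \<union> range (\<lambda>m. 2 * D m) \<union> {v 1 + 2} \<union> range (\<lambda>m. v (Suc (Suc m)) + 1))"
proof -
  define c where "c y = of_bool (0 < y \<and> y \<le> stair 1)
    + (staircase_profile D v y + of_bool (stair 1 < y \<and> y \<le> 1)) + of_bool (stair 1 = y)" for y
  note count = dipped_staircase_count[OF assms, of c, OF c_def]
  have counts:
    "c y \<in> {0, 1} \<union> range (\<lambda>m. 2 * D m) \<union> {v 1 + 2} \<union> range (\<lambda>m. v (Suc (Suc m)) + 1)" for y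
  proof (cases y rule: stair_cases)
    case (2 m)
    consider "m = 0" | "m = 1" | k where "m = Suc (Suc k)"
      by (metis One_nat_def nat.exhaust)
    then show ?thesis
      using 2 count(1-3) by cases auto
  next
    case 4
    then show ?thesis
      using count(5,6) by (cases "y = 1") auto
  qed (use count(4,5) in auto)
  have "c (mid_stair m) = 2 * D m" for m
    using count(4) mid_stair_bounds by metis
  then have witnesses: "c ` ({2, 0} \<union> range mid_stair \<union> {stair 1} \<union> range (\<lambda>m. stair (Suc (Suc m))))
      = {0, 1} \<union> range (\<lambda>m. 2 * D m) \<union> {v 1 + 2} \<union> range (\<lambda>m. v (Suc (Suc m)) + 1)"
    using count(1-3,5) by (simp add: image_Un image_image)
  show ?thesis
    by (rule Omega_eqI[OF has_profile_dipped_staircase[OF assms] _ counts witnesses])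
      (simp add: c_def dipped_staircase_def)
qed

section \<open>Realising a given set of level counts\<close>

lemma admissible_paired:
  assumes "\<And>n. odd (q n)" "\<And>n. 1 \<le> t n \<and> t n \<le> q n"
  shows "admissible (\<lambda>k. (q (k div 2) + 1) div 2) (\<lambda>m. if odd m then t (m div 2) else 1)"
  unfolding admissible_def
proof (intro conjI allI)
  fix m
  have D: "2 * ((q k + 1) div 2) = q k + 1" for k
    using assms(1)[of k] by (auto elim!: oddE)
  then have D1: "1 \<le> (q k + 1) div 2" for k
    by (metis One_nat_def Suc_leI add_is_0 mult_0_right neq0_conv one_neq_zero)
  then show "1 \<le> (q (m div 2) + 1) div 2"
    by blast
  show "1 \<le> (if odd (Suc m) then t (Suc m div 2) else 1)"
    using assms(2) by simp
  show "(if odd (Suc m) then t (Suc m div 2) else 1) + 1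
      \<le> (q (m div 2) + 1) div 2 + (q (Suc m div 2) + 1) div 2"
  proof (cases "even m")
    case True
    then show ?thesis
      using D[of "m div 2"] assms(2)[of "m div 2"] by simp
  next
    case False
    then show ?thesis
      using D1[of "m div 2"] D1[of "Suc m div 2"] by simp
  qed
qed

lemma odd_above_if_odd_dominated:
  fixes S :: "nat set"
  assumes "1 \<in> S" "s \<in> S" and dominated: "\<And>e. e \<in> S \<Longrightarrow> even e \<Longrightarrow> 2 \<le> e \<Longrightarrow> \<exists>q\<in>S. odd q \<and> e \<le> q"
  shows "\<exists>q\<in>S. odd q \<and> s \<le> q"
proof (cases "odd s")
  case False
  then have "s = 0 \<or> 2 \<le> s"
    by presburger
  then show ?thesis
    using assms False by fastforce
qed (use assms in blast)

lemma exists_path_Omega_if_odd_dominated: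
  assumes "0 \<in> S" "1 \<in> S" and dominated: "\<And>e. e \<in> S \<Longrightarrow> even e \<Longrightarrow> 2 \<le> e \<Longrightarrow> \<exists>q\<in>S. odd q \<and> e \<le> q"
  shows "\<exists>f. path f \<and> Omega f = enat ` S"
proof -
  \<comment> \<open>units \<open>2 n\<close> and \<open>2 n + 1\<close> share \<open>D = (q n + 1) / 2\<close>, so the stair between them can take
    any value up to \<open>q n\<close>, in particular the value \<open>t n\<close>\<close>
  define t where "t n = (if n \<in> S \<and> n \<noteq> 0 then n else 1)" for n
  have t: "t n \<in> S" "1 \<le> t n" for n
    using assms(2) by (auto simp: t_def)
  have "\<exists>q. \<forall>n. q n \<in> S \<and> odd (q n) \<and> t n \<le> q n"
    using odd_above_if_odd_dominated[OF assms(2) t(1) dominated] by (intro choice) blast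
  then obtain q where q: "\<And>n. q n \<in> S \<and> odd (q n) \<and> t n \<le> q n"
    by blast
  define D where "D k = (q (k div 2) + 1) div 2" for k
  define v where "v m = (if odd m then t (m div 2) else 1)" for m
  have adm: "admissible D v"
    unfolding D_def v_def using q t(2) by (intro admissible_paired) auto
  have "2 * D k - 1 = q (k div 2)" for k
    using q[of "k div 2"] by (auto simp: D_def elim!: oddE)
  then have sub: "{0, 1} \<union> range (\<lambda>m. 2 * D m - 1) \<union> range (\<lambda>m. v (Suc m)) \<subseteq> S"
    using assms(1,2) q t(1) by (auto simp: v_def)
  have "s \<in> range (\<lambda>m. v (Suc m))" if "s \<in> S" "s \<noteq> 0" for s
    using that by (intro range_eqI[of _ _ "2 * s"]) (simp add: v_def t_def)
  then have "S \<subseteq> {0, 1} \<union> range (\<lambda>m. 2 * D m - 1) \<union> range (\<lambda>m. v (Suc m))"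
    by blast
  with sub have "{0, 1} \<union> range (\<lambda>m. 2 * D m - 1) \<union> range (\<lambda>m. v (Suc m)) = S"
    by (rule subset_antisym)
  then have "Omega (staircase D v) = enat ` S"
    using Omega_staircase[OF adm] by (simp only:)
  then show ?thesis
    using path_staircase by blast
qed

lemma admissible_uniform:
  assumes "\<And>m. b \<le> 2 * D m" "4 \<le> b" "\<And>m. 2 \<le> w m \<and> w m \<le> b"
  shows "admissible D (\<lambda>m. if m = 1 then b - 2 else w (m - 2) - 1)"
  unfolding admissible_def
proof (intro conjI allI)
  fix m
  show "1 \<le> D m"
    using assms(1)[of m] assms(2) by linarith
  have "b \<le> D m + D (Suc m)"
    using assms(1)[of m] assms(1)[of "Suc m"] by linarith
  then show "1 \<le> (if Suc m = 1 then b - 2 else w (Suc m - 2) - 1)"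
    "(if Suc m = 1 then b - 2 else w (Suc m - 2) - 1) + 1 \<le> D m + D (Suc m)"
    using assms(2) assms(3)[of "m - 1"] by auto
qed

lemma exists_path_Omega_if_even_bound:
  assumes "0 \<in> S" "1 \<in> S" "b \<in> S" "even b" "4 \<le> b" and bound: "\<And>q. q \<in> S \<Longrightarrow> odd q \<Longrightarrow> 3 \<le> q \<Longrightarrow> q < b"
  shows "\<exists>f. path f \<and> Omega f = enat ` S"
proof -
  \<comment> \<open>all \<open>D m \<ge> b / 2\<close>, so every value up to \<open>b\<close> can be taken at the stairs; the even
    elements beyond \<open>b\<close> become the block counts \<open>2 D m\<close>\<close>
  define D where "D m = (if m \<in> S \<and> even m \<and> b \<le> m then m else b) div 2" for m
  define w where "w m = (if m \<in> S \<and> 2 \<le> m \<and> m \<le> b then m else b)" for m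
  define v where "v m = (if m = 1 then b - 2 else w (m - 2) - 1)" for m
  have D: "2 * D m = (if m \<in> S \<and> even m \<and> b \<le> m then m else b)" for m
    using assms(4) by (auto simp: D_def)
  have w: "w m \<in> S" "2 \<le> w m" "w m \<le> b" for m
    using assms(3,5) by (auto simp: w_def)
  have v: "v (Suc (Suc m)) + 1 = w m" "v 1 + 2 = b" for m
    using w(2)[of m] assms(5) by (simp_all add: v_def)
  have adm: "admissible D v"
    unfolding v_def using D assms(5) w(2,3) by (intro admissible_uniform) auto
  have sub: "{0, 1} \<union> range (\<lambda>m. 2 * D m) \<union> {v 1 + 2} \<union> range (\<lambda>m. v (Suc (Suc m)) + 1) \<subseteq> S"
    using assms(1-5) D v w(1) by (auto simp: v_def)
  have "s \<in> range (\<lambda>m. 2 * D m) \<union> range (\<lambda>m. v (Suc (Suc m)) + 1)" if "s \<in> S" "2 \<le> s" for s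
  proof (cases "s \<le> b")
    case True
    then have "w s = s"
      using that by (simp add: w_def)
    then show ?thesis
      using v(1)[of s] by (metis UnI2 rangeI)
  next
    case False
    moreover have "3 \<le> s"
      using False assms(5) by linarith
    ultimately have "even s"
      using bound[OF that(1)] by (auto simp: not_le)
    then have "2 * D s = s"
      using False that by (simp add: D)
    then show ?thesis
      by (metis UnI1 rangeI)
  qed
  moreover have "s \<in> {0, 1}" if "s \<in> S" "\<not> 2 \<le> s" for s
    using that by auto
  ultimately have "S \<subseteq> {0, 1} \<union> range (\<lambda>m. 2 * D m) \<union> {v 1 + 2} \<union> range (\<lambda>m. v (Suc (Suc m)) + 1)"
    by blast
  with sub have "{0, 1} \<union> range (\<lambda>m. 2 * D m) \<union> {v 1 + 2} \<union> range (\<lambda>m. v (Suc (Suc m)) + 1) = S"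
    by (rule subset_antisym)
  then have "Omega (dipped_staircase D v) = enat ` S"
    using Omega_dipped_staircase[OF adm] by (simp only:)
  then show ?thesis
    using path_dipped_staircase by blast
qed

lemma Omega_tent: "Omega (linepath 1 0 +++ linepath 0 1) = enat ` {0, 1, 2}"
proof -
  define c :: "real \<Rightarrow> nat"
    where "c y = of_bool (0 < y \<and> y \<le> 1) + of_bool (0 \<le> y \<and> y < 1) + of_bool (1 = y)" for y
  have P: "has_profile (linepath 1 0 +++ linepath 0 1)
      (\<lambda>y. of_bool (0 < y \<and> y \<le> 1) + of_bool (0 \<le> y \<and> y < 1))"
    by (intro has_profile_joinpaths has_profile_linepath_down has_profile_linepath_up) simp_all
  have counts: "c y \<in> {0, 1, 2}" for y
    by (simp add: c_def)
  have "c 2 = 0" "c 0 = 1" "c (1/2) = 2"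
    by (simp_all add: c_def)
  then have witnesses: "c ` {2, 0, 1/2} = {0, 1, 2}"
    by (simp only: image_insert image_empty)
  show ?thesis
    by (rule Omega_eqI[OF P _ counts witnesses]) (simp add: c_def)
qed

lemma odd_dominated_or_even_bound:
  fixes S :: "nat set"
  assumes "0 \<in> S" "1 \<in> S" "S \<noteq> {0, 1, 2}"
  obtains "\<And>e. e \<in> S \<Longrightarrow> even e \<Longrightarrow> 2 \<le> e \<Longrightarrow> \<exists>q\<in>S. odd q \<and> e \<le> q"
    | b where "b \<in> S" "even b" "4 \<le> b" "\<And>q. q \<in> S \<Longrightarrow> odd q \<Longrightarrow> 3 \<le> q \<Longrightarrow> q < b"
proof (cases "\<forall>e\<in>S. even e \<and> 2 \<le> e \<longrightarrow> (\<exists>q\<in>S. odd q \<and> e \<le> q)")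
  case False
  then obtain e where e: "e \<in> S" "even e" "2 \<le> e" and below: "\<And>q. q \<in> S \<Longrightarrow> odd q \<Longrightarrow> q < e"
    by (auto simp: not_le)
  show ?thesis
  proof (cases "4 \<le> e")
    case False
    with e have "e = 2"
      by presburger
    with assms e obtain s where s: "s \<in> S" "s \<notin> {0, 1, 2}"
      by blast
    have "\<not> odd s"
      using below[OF s(1)] s(2) \<open>e = 2\<close> by auto
    moreover have "s \<noteq> 0" "s \<noteq> 1" "s \<noteq> 2"
      using s(2) by auto
    ultimately have "even s" "4 \<le> s"
      by presburger+
    moreover have "q < s" if "q \<in> S" "odd q" "3 \<le> q" for q
      using below[OF that(1,2)] that(3) \<open>e = 2\<close> by simp
    ultimately show ?thesis
      using that(2) s(1) by blast
  qed (use that(2) e below in blast)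
qed (use that(1) in blast)

theorem proposition1:
  fixes S :: "nat set"
  assumes "0 \<in> S" and "1 \<in> S"
  shows "\<exists>f :: real \<Rightarrow> real. continuous_on {0..1} f \<and> Omega f = enat ` S"
proof -
  have "\<exists>f. path f \<and> Omega f = enat ` S"
  proof (cases "S = {0, 1, 2}")
    case True
    moreover have "path (linepath 1 0 +++ linepath (0::real) 1)"
      by simp
    ultimately show ?thesis
      using Omega_tent by blast
  next
    case False
    then show ?thesis
      by (cases rule: odd_dominated_or_even_bound[OF assms])
        (use exists_path_Omega_if_odd_dominated[OF assms] exists_path_Omega_if_even_bound[OF assms]
          in blast)+
  qed
  then show ?thesis
    by (auto simp: path_def)
qed

end
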